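(* For every integer $n\ge 3$, $$\sum_{\substack{b\ge 0,\ k\ge 0\\ 2b+k+1=n}}\#\mathrm{SYT}^{+k}\big((b+1,b)\big)=\mathrm{Cat}(n)-\mathrm{Cat}(n-1)=\frac{3}{n+1}\binom{2n-2}{n},$$ where for $b=0$ the shape $(1,0)$ is the single-cell shape $(1)$ and $\mathrm{Cat}(m)=\frac1{m+1}\binom{2m}{m}$.
   Context: $\mathrm{SYT}^{+k}(\lambda)$: for a partition $\lambda$ of $N$ and $k\ge 0$, the set of fillings $S$ of the cells of the Ferrers diagram of $\lambda$ by nonempty sets of positive integers forming a set partition of $[N+k]$, such that $\max S(u)<\min S(v)$ whenever $u\ne v$ and $u$ is weakly northwest of $v$. *)

theory Defs
  imports Complex_Main
begin

text \<open>A partition is given as a list of parts (weakly decreasing, trailing zeros allowed).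
  Its Ferrers diagram (English convention, 0-indexed): cell (i,j) = row i, column j.\<close>
definition ferrers :: "nat list \<Rightarrow> (nat \<times> nat) set" where
  "ferrers lam = {(i, j). i < length lam \<and> j < lam ! i}"

definition weakly_nw :: "nat \<times> nat \<Rightarrow> nat \<times> nat \<Rightarrow> bool" where
  "weakly_nw u v \<longleftrightarrow> fst u \<le> fst v \<and> snd u \<le> snd v"

definition SYT_plus :: "nat \<Rightarrow> nat list \<Rightarrow> ((nat \<times> nat) \<Rightarrow> nat set) set" where
  "SYT_plus k lam = {S.
     (\<forall>c. c \<notin> ferrers lam \<longrightarrow> S c = {}) \<and>
     (\<forall>c \<in> ferrers lam. S c \<noteq> {}) \<and>
     (\<forall>u \<in> ferrers lam. \<forall>v \<in> ferrers lam. u \<noteq> v \<longrightarrow> S u \<inter> S v = {}) \<and>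
     (\<Union>c \<in> ferrers lam. S c) = {1 .. sum_list lam + k} \<and>
     (\<forall>u \<in> ferrers lam. \<forall>v \<in> ferrers lam. u \<noteq> v \<and> weakly_nw u v \<longrightarrow> Max (S u) < Min (S v))}"

definition catalan :: "nat \<Rightarrow> real" where
  "catalan m = (2*m choose m) / (m + 1)"

end

theory Submission
  imports Defs
begin

text \<open>Listing the entries 1, ..., m of a set-valued filling in increasing order and recording
  the cell of each entry gives a word over the cells that uses every cell and never has a letter
  strictly northwest of an earlier one; the filling is recovered from the word. The last letter
  of such a word is a corner, and deleting it leaves a word for the same shape or for the shape
  without that corner. For the two-row shapes (y + d, y) with y \<ge> 1 this makes the counts,
  summed over y, satisfy the same three-term recursion in d as the ballot numbers
  C(2L, L + d) - C(2L, L + d + 1), up to a correction coming from the one-row shapes. Summing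
  over the shapes (b + 1, b) therefore gives C(2n - 2, n) - C(2n - 2, n + 1), which equals both
  Cat(n) - Cat(n - 1) and 3/(n + 1) C(2n - 2, n).\<close>

definition strictly_nw :: "nat \<times> nat \<Rightarrow> nat \<times> nat \<Rightarrow> bool" where
  "strictly_nw u v \<longleftrightarrow> u \<noteq> v \<and> weakly_nw u v"

definition set_valued_fillings ::
    "(nat \<times> nat) set \<Rightarrow> nat \<Rightarrow> ((nat \<times> nat) \<Rightarrow> nat set) set" where
  "set_valued_fillings F m = {S.
     (\<forall>c. c \<notin> F \<longrightarrow> S c = {}) \<and>
     (\<forall>c \<in> F. S c \<noteq> {}) \<and>
     (\<forall>u \<in> F. \<forall>v \<in> F. u \<noteq> v \<longrightarrow> S u \<inter> S v = {}) \<and>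
     (\<Union>c \<in> F. S c) = {1 .. m} \<and>
     (\<forall>u \<in> F. \<forall>v \<in> F. strictly_nw u v \<longrightarrow> Max (S u) < Min (S v))}"

lemma SYT_plus_eq_set_valued_fillings:
  "SYT_plus k lam = set_valued_fillings (ferrers lam) (sum_list lam + k)"
  by (simp add: SYT_plus_def set_valued_fillings_def strictly_nw_def)

definition reading_words :: "(nat \<times> nat) set \<Rightarrow> nat \<Rightarrow> (nat \<times> nat) list set" where
  "reading_words F m =
     {ws. length ws = m \<and> set ws = F \<and> sorted_wrt (\<lambda>u v. \<not> strictly_nw v u) ws}"

definition filling_of_word :: "(nat \<times> nat) list \<Rightarrow> (nat \<times> nat) \<Rightarrow> nat set" where
  "filling_of_word ws c = {x. 1 \<le> x \<and> x \<le> length ws \<and> ws ! (x - 1) = c}"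

lemma filling_of_word_less:
  assumes sorted: "sorted_wrt (\<lambda>u v. \<not> strictly_nw v u) ws"
    and nw: "strictly_nw u v"
    and x: "x \<in> filling_of_word ws u" and y: "y \<in> filling_of_word ws v"
  shows "x < y"
proof (rule ccontr)
  assume "\<not> x < y"
  moreover have "x \<noteq> y" using x y nw by (auto simp: filling_of_word_def strictly_nw_def)
  ultimately have "y - 1 < x - 1" "x - 1 < length ws"
    using x y by (auto simp: filling_of_word_def)
  then have "\<not> strictly_nw (ws ! (x - 1)) (ws ! (y - 1))"
    using sorted by (simp add: sorted_wrt_iff_nth_less)
  then show False using x y nw by (simp add: filling_of_word_def)
qed

lemma filling_of_word_in_fillings:
  assumes "ws \<in> reading_words F m"
  shows "filling_of_word ws \<in> set_valued_fillings F m"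
proof -
  from assms have len: "length ws = m" and set: "set ws = F"
    and sorted: "sorted_wrt (\<lambda>u v. \<not> strictly_nw v u) ws"
    by (auto simp: reading_words_def)
  let ?S = "filling_of_word ws"
  have mem: "x \<in> ?S c \<longleftrightarrow> x \<in> {1..m} \<and> ws ! (x - 1) = c" for x c
    using len by (auto simp: filling_of_word_def)
  have letter_in_F: "ws ! (x - 1) \<in> F" if "x \<in> {1..m}" for x
    using that len set by auto
  have outside: "?S c = {}" if "c \<notin> F" for c
    using that letter_in_F by (auto simp: mem)
  have nonempty: "?S c \<noteq> {}" if "c \<in> F" for c
  proof -
    from that set obtain i where "i < length ws" "ws ! i = c" by (auto simp: in_set_conv_nth)
    then have "Suc i \<in> ?S c" by (simp add: filling_of_word_def)
    then show ?thesis by blast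
  qed
  have cover: "(\<Union>c \<in> F. ?S c) = {1..m}"
    using letter_in_F by (auto simp: mem)
  have disjoint: "?S u \<inter> ?S v = {}" if "u \<noteq> v" for u v
    using that by (auto simp: mem)
  have finite: "finite (?S c)" for c
    by (rule finite_subset[of _ "{1..m}"]) (auto simp: mem)
  have "Max (?S u) < Min (?S v)" if "u \<in> F" "v \<in> F" "strictly_nw u v" for u v
  proof (rule filling_of_word_less[OF sorted \<open>strictly_nw u v\<close>])
    show "Max (?S u) \<in> ?S u" using finite nonempty[OF \<open>u \<in> F\<close>] by (rule Max_in)
    show "Min (?S v) \<in> ?S v" using finite nonempty[OF \<open>v \<in> F\<close>] by (rule Min_in)
  qed
  with outside nonempty cover disjoint show ?thesis
    by (simp add: set_valued_fillings_def)
qed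

lemma filling_is_filling_of_word:
  assumes "S \<in> set_valued_fillings F m"
  obtains ws where "ws \<in> reading_words F m" "filling_of_word ws = S"
proof -
  from assms have outside: "\<And>c. c \<notin> F \<Longrightarrow> S c = {}"
    and nonempty: "\<And>c. c \<in> F \<Longrightarrow> S c \<noteq> {}"
    and disjoint: "\<And>u v. u \<in> F \<Longrightarrow> v \<in> F \<Longrightarrow> u \<noteq> v \<Longrightarrow> S u \<inter> S v = {}"
    and cover: "(\<Union>c \<in> F. S c) = {1..m}"
    and ordered: "\<And>u v. u \<in> F \<Longrightarrow> v \<in> F \<Longrightarrow> strictly_nw u v \<Longrightarrow> Max (S u) < Min (S v)"
    by (auto simp: set_valued_fillings_def)
  have range: "S c \<subseteq> {1..m}" for c
    using outside cover by (cases "c \<in> F") auto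
  have finite: "finite (S c)" for c
    using range finite_subset by blast
  define ws where "ws = map (\<lambda>i. SOME c. c \<in> F \<and> Suc i \<in> S c) [0..<m]"
  have len: "length ws = m" by (simp add: ws_def)
  have letter: "ws ! i \<in> F \<and> Suc i \<in> S (ws ! i)" if "i < m" for i
  proof -
    have "Suc i \<in> (\<Union>c \<in> F. S c)" using that cover by simp
    then have "\<exists>c. c \<in> F \<and> Suc i \<in> S c" by blast
    from someI_ex[OF this] show ?thesis using that by (simp add: ws_def)
  qed
  have letter_iff: "Suc i \<in> S c \<longleftrightarrow> ws ! i = c" if "i < m" for i c
    using letter[OF that] outside disjoint by blast
  have filling: "filling_of_word ws = S"
  proof (intro ext set_eqI)
    fix c x
    show "x \<in> filling_of_word ws c \<longleftrightarrow> x \<in> S c"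
      using letter_iff[of "x - 1" c] range[of c] len
      by (cases x) (auto simp: filling_of_word_def)
  qed
  have "set ws = F"
  proof
    show "set ws \<subseteq> F" using letter len by (metis in_set_conv_nth subsetI)
    show "F \<subseteq> set ws"
    proof
      fix c assume "c \<in> F"
      then obtain x where "x \<in> filling_of_word ws c" using nonempty filling by blast
      then show "c \<in> set ws" by (auto simp: filling_of_word_def)
    qed
  qed
  moreover have "sorted_wrt (\<lambda>u v. \<not> strictly_nw v u) ws"
  proof (unfold sorted_wrt_iff_nth_less, intro allI impI notI)
    fix i j assume ij: "i < j" "j < length ws" and nw: "strictly_nw (ws ! j) (ws ! i)"
    have "Suc j \<le> Max (S (ws ! j))" "Min (S (ws ! i)) \<le> Suc i"
      using letter ij len finite by auto
    moreover have "Max (S (ws ! j)) < Min (S (ws ! i))"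
      using ordered nw letter ij len by auto
    ultimately show False using ij by simp
  qed
  ultimately have "ws \<in> reading_words F m" using len by (simp add: reading_words_def)
  with filling show ?thesis using that by blast
qed

lemma inj_on_filling_of_word: "inj_on filling_of_word (reading_words F m)"
proof
  fix ws ws' assume "ws \<in> reading_words F m" "ws' \<in> reading_words F m"
    and eq: "filling_of_word ws = filling_of_word ws'"
  then have len: "length ws = length ws'" by (simp add: reading_words_def)
  show "ws = ws'"
  proof (rule nth_equalityI[OF len])
    fix i assume "i < length ws"
    then have "Suc i \<in> filling_of_word ws' (ws ! i)"
      using eq by (simp add: filling_of_word_def flip: eq)
    then show "ws ! i = ws' ! i" by (simp add: filling_of_word_def)
  qed
qed

lemma card_set_valued_fillings:
  "card (set_valued_fillings F m) = card (reading_words F m)"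
proof -
  have "filling_of_word ` reading_words F m = set_valued_fillings F m"
    using filling_of_word_in_fillings filling_is_filling_of_word
    by (metis image_eqI image_subsetI subsetI subset_antisym)
  then have "bij_betw filling_of_word (reading_words F m) (set_valued_fillings F m)"
    by (rule bij_betw_imageI[OF inj_on_filling_of_word])
  then show ?thesis by (simp add: bij_betw_same_card)
qed

definition corners :: "(nat \<times> nat) set \<Rightarrow> (nat \<times> nat) set" where
  "corners F = {z \<in> F. \<forall>x \<in> F. \<not> strictly_nw z x}"

lemma snoc_in_reading_words_iff:
  "ws @ [z] \<in> reading_words F (Suc m) \<longleftrightarrow>
     z \<in> corners F \<and> (ws \<in> reading_words F m \<or> ws \<in> reading_words (F - {z}) m)"
  by (cases "z \<in> set ws")
    (auto simp: reading_words_def corners_def sorted_wrt_append strictly_nw_def)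

lemma reading_words_Suc:
  "reading_words F (Suc m) =
     (\<Union>z \<in> corners F. (\<lambda>ws. ws @ [z]) ` (reading_words F m \<union> reading_words (F - {z}) m))"
proof (intro equalityI subsetI)
  fix w assume w: "w \<in> reading_words F (Suc m)"
  then obtain ws z where "w = ws @ [z]"
    by (cases w rule: rev_cases) (auto simp: reading_words_def)
  with w show "w \<in> (\<Union>z \<in> corners F.
      (\<lambda>ws. ws @ [z]) ` (reading_words F m \<union> reading_words (F - {z}) m))"
    using snoc_in_reading_words_iff by blast
qed (auto simp: snoc_in_reading_words_iff)

lemma finite_reading_words: "finite F \<Longrightarrow> finite (reading_words F m)"
  by (rule finite_subset[OF _ finite_lists_length_eq[of F m]]) (auto simp: reading_words_def)

lemma card_reading_words_Suc:
  assumes "finite F"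
  shows "card (reading_words F (Suc m))
           = (\<Sum>z \<in> corners F. card (reading_words F m) + card (reading_words (F - {z}) m))"
proof -
  have "finite (corners F)" using assms by (simp add: corners_def)
  moreover have "card ((\<lambda>ws. ws @ [z]) ` (reading_words F m \<union> reading_words (F - {z}) m))
      = card (reading_words F m) + card (reading_words (F - {z}) m)" if "z \<in> corners F" for z
  proof -
    have "reading_words F m \<inter> reading_words (F - {z}) m = {}"
      using that by (auto simp: reading_words_def corners_def)
    moreover have "inj (\<lambda>ws. ws @ [z])" by (simp add: inj_def)
    ultimately show ?thesis
      using assms by (simp add: card_image inj_on_subset card_Un_disjoint finite_reading_words)
  qed
  ultimately show ?thesis
    unfolding reading_words_Suc
    by (subst card_UN_disjoint) (auto simp: assms finite_reading_words)
qed

definition two_row :: "nat \<Rightarrow> nat \<Rightarrow> (nat \<times> nat) set" where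
  "two_row a c = {(i, j). (i = 0 \<and> j < a) \<or> (i = 1 \<and> j < c)}"

lemma ferrers_two_row: "ferrers [b + 1, b] = two_row (b + 1) b"
  by (auto simp: ferrers_def two_row_def less_Suc_eq)

lemma two_row_eq: "two_row a c = Pair 0 ` {..<a} \<union> Pair 1 ` {..<c}"
  by (auto simp: two_row_def)

lemma finite_two_row: "finite (two_row a c)"
  by (simp add: two_row_eq)

lemma card_two_row: "card (two_row a c) = a + c"
  unfolding two_row_eq by (subst card_Un_disjoint) (auto simp: card_image inj_on_def)

lemma mem_corners_iff:
  assumes down_closed: "\<And>u v. v \<in> F \<Longrightarrow> weakly_nw u v \<Longrightarrow> u \<in> F"
  shows "(i, j) \<in> corners F \<longleftrightarrow> (i, j) \<in> F \<and> (i, Suc j) \<notin> F \<and> (Suc i, j) \<notin> F"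
proof
  assume "(i, j) \<in> F \<and> (i, Suc j) \<notin> F \<and> (Suc i, j) \<notin> F"
  moreover have "(i, Suc j) \<in> F \<or> (Suc i, j) \<in> F" if "v \<in> F" "strictly_nw (i, j) v" for v
    using that down_closed[of v] by (cases v) (auto simp: strictly_nw_def weakly_nw_def)
  ultimately show "(i, j) \<in> corners F" by (auto simp: corners_def)
qed (auto simp: corners_def strictly_nw_def weakly_nw_def)

lemma corners_two_row:
  assumes "c \<le> a"
  shows "corners (two_row a c) =
           (if c < a then {(0, a - 1)} else {}) \<union> (if 0 < c then {(1, c - 1)} else {})"
proof (intro set_eqI)
  fix z :: "nat \<times> nat"
  obtain i j where z: "z = (i, j)" by fastforce
  have "(i, j) \<in> corners (two_row a c) \<longleftrightarrow>
          (i, j) \<in> two_row a c \<and> (i, Suc j) \<notin> two_row a c \<and> (Suc i, j) \<notin> two_row a c"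
    by (rule mem_corners_iff) (use assms in \<open>auto simp: two_row_def weakly_nw_def\<close>)
  then show "z \<in> corners (two_row a c) \<longleftrightarrow>
               z \<in> (if c < a then {(0, a - 1)} else {}) \<union> (if 0 < c then {(1, c - 1)} else {})"
    using assms by (auto simp: z two_row_def)
qed

lemma two_row_remove_first_row_end:
  "0 < a \<Longrightarrow> two_row a c - {(0, a - 1)} = two_row (a - 1) c"
  by (auto simp: two_row_def)

lemma two_row_remove_second_row_end:
  "0 < c \<Longrightarrow> two_row a c - {(1, c - 1)} = two_row a (c - 1)"
  by (auto simp: two_row_def)

definition two_row_count :: "nat \<Rightarrow> nat \<Rightarrow> nat \<Rightarrow> nat" where
  "two_row_count a c m = card (reading_words (two_row a c) m)"

lemma card_SYT_plus_two_row:
  "card (SYT_plus k [b + 1, b]) = two_row_count (b + 1) b (2 * b + 1 + k)"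
  unfolding SYT_plus_eq_set_valued_fillings ferrers_two_row card_set_valued_fillings
    two_row_count_def by (simp add: mult_2)

lemma two_row_count_Suc:
  assumes "c \<le> a"
  shows "two_row_count a c (Suc m) =
           (if c < a then two_row_count a c m + two_row_count (a - 1) c m else 0) +
           (if 0 < c then two_row_count a c m + two_row_count a (c - 1) m else 0)"
proof -
  have "two_row_count a c (Suc m) = (\<Sum>z \<in> corners (two_row a c).
          two_row_count a c m + card (reading_words (two_row a c - {z}) m))"
    by (simp add: two_row_count_def card_reading_words_Suc finite_two_row)
  then show ?thesis
    using corners_two_row[OF assms] two_row_remove_first_row_end[of a c]
      two_row_remove_second_row_end[of c a]
    by (cases "c < a"; cases "0 < c") (simp_all add: two_row_count_def)
qed

lemma two_row_count_0: "two_row_count a c 0 = (if a = 0 \<and> c = 0 then 1 else 0)"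
proof -
  have "two_row a c = {} \<longleftrightarrow> a = 0 \<and> c = 0"
    using card_two_row[of a c] finite_two_row[of a c] by fastforce
  moreover have "reading_words F 0 = (if F = {} then {[]} else {})" for F
    by (auto simp: reading_words_def)
  ultimately show ?thesis by (simp add: two_row_count_def)
qed

lemma two_row_count_eq_0: "m < a + c \<Longrightarrow> two_row_count a c m = 0"
proof -
  assume m: "m < a + c"
  have "length ws \<ge> a + c" if "set ws = two_row a c" for ws :: "(nat \<times> nat) list"
    using card_length[of ws] that card_two_row by simp
  with m have "reading_words (two_row a c) m = {}" by (fastforce simp: reading_words_def)
  then show ?thesis by (simp add: two_row_count_def)
qed

lemma two_row_count_one_row: "two_row_count (Suc d) 0 (Suc m) = m choose d"
proof (induction m arbitrary: d)
  case 0
  show ?case using two_row_count_Suc[of 0 "Suc d" 0] by (simp add: two_row_count_0)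
next
  case (Suc m)
  have "two_row_count (Suc d) 0 (Suc (Suc m))
      = two_row_count (Suc d) 0 (Suc m) + two_row_count d 0 (Suc m)"
    using two_row_count_Suc[of 0 "Suc d" "Suc m"] by simp
  also have "\<dots> = Suc m choose d"
    using Suc.IH two_row_count_Suc[of 0 0 m] by (cases d) simp_all
  finally show ?case .
qed

definition two_row_diff_sum :: "nat \<Rightarrow> nat \<Rightarrow> nat" where
  "two_row_diff_sum m d = (\<Sum>y \<in> {1..m}. two_row_count (y + d) y m)"

lemma two_row_diff_sum_Suc_range:
  "(\<Sum>y \<in> {1..Suc m}. two_row_count (y + d) y m) = two_row_diff_sum m d"
  using two_row_count_eq_0[of m "Suc m + d" "Suc m"] by (simp add: two_row_diff_sum_def)

lemma two_row_count_Suc_diff: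
  assumes "0 < y"
  shows "two_row_count (y + d) y (Suc m) =
           (if 0 < d then two_row_count (y + d) y m + two_row_count (y + (d - 1)) y m else 0) +
           two_row_count (y + d) y m + two_row_count ((y - 1) + Suc d) (y - 1) m"
proof -
  have "y + d - 1 = y + (d - 1)" if "0 < d" using that by simp
  moreover have "(y - 1) + Suc d = y + d" using assms by simp
  ultimately show ?thesis using two_row_count_Suc[of y "y + d" m] assms by auto
qed

lemma two_row_diff_sum_Suc:
  "two_row_diff_sum (Suc m) d =
     (if 0 < d then two_row_diff_sum m d + two_row_diff_sum m (d - 1) else 0) +
     two_row_diff_sum m d + two_row_count (Suc d) 0 m + two_row_diff_sum m (Suc d)"
proof -
  have shifted: "(\<Sum>y \<in> {1..Suc m}. two_row_count ((y - 1) + Suc d) (y - 1) m)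
      = two_row_count (Suc d) 0 m + two_row_diff_sum m (Suc d)"
  proof -
    have "(\<Sum>y \<in> {1..Suc m}. two_row_count ((y - 1) + Suc d) (y - 1) m)
        = (\<Sum>y \<in> {0..m}. two_row_count (y + Suc d) y m)"
      by (simp only: sum.atLeast_Suc_atMost_Suc_shift One_nat_def) simp
    also have "\<dots> = two_row_count (Suc d) 0 m + two_row_diff_sum m (Suc d)"
      by (simp add: sum.atLeast_Suc_atMost two_row_diff_sum_def)
    finally show ?thesis .
  qed
  have "two_row_diff_sum (Suc m) d =
      (\<Sum>y \<in> {1..Suc m}. if 0 < d
         then two_row_count (y + d) y m + two_row_count (y + (d - 1)) y m else 0) +
      (\<Sum>y \<in> {1..Suc m}. two_row_count (y + d) y m) +
      (\<Sum>y \<in> {1..Suc m}. two_row_count ((y - 1) + Suc d) (y - 1) m)"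
    by (simp add: two_row_diff_sum_def two_row_count_Suc_diff sum.distrib)
  also have "\<dots> = (if 0 < d then two_row_diff_sum m d + two_row_diff_sum m (d - 1) else 0) +
      two_row_diff_sum m d + two_row_count (Suc d) 0 m + two_row_diff_sum m (Suc d)"
    by (cases "0 < d")
      (simp_all only: if_True if_False sum.distrib sum.neutral_const shifted
         two_row_diff_sum_Suc_range add.assoc)
  finally show ?thesis .
qed

definition ballot :: "nat \<Rightarrow> nat \<Rightarrow> int" where
  "ballot L d = int ((2 * L) choose (L + d)) - int ((2 * L) choose (L + d + 1))"

lemma ballot_Suc:
  "ballot (Suc L) d =
     (if 0 < d then ballot L (d - 1) else 0) + ballot L (Suc d)
     + (if 0 < d then 2 else 1) * ballot L d"
proof (cases d)
  case 0
  show ?thesis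
  proof (cases L)
    case (Suc L')
    have "(2 * L) choose L' = (2 * L) choose (L + 1)"
      using binomial_symmetric[of L' "2 * L"] Suc by simp
    then show ?thesis using 0 Suc by (simp add: ballot_def numeral_eq_Suc)
  qed (simp add: 0 ballot_def numeral_2_eq_2)
qed (simp add: ballot_def numeral_eq_Suc)

lemma two_row_diff_sum_1: "two_row_diff_sum 1 d = 0"
  using two_row_count_eq_0[of 1 "Suc d" 1] by (simp add: two_row_diff_sum_def)

lemma two_row_diff_sum_closed_form:
  "int (two_row_diff_sum (Suc (Suc j)) d) =
     ballot (Suc j) d - (if d = 0 then 0 else int (j choose (d - 1)))"
proof (induction j arbitrary: d)
  case 0
  have "two_row_diff_sum 2 d = (if d = 0 then 1 else 0)"
    using two_row_diff_sum_Suc[of 1 d] two_row_diff_sum_1 two_row_count_one_row[of d 0]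
    by (simp add: numeral_2_eq_2)
  then show ?case
    by (cases d rule: nat.exhaust[case_product nat.exhaust[of "d - 1"]])
      (simp_all add: ballot_def numeral_2_eq_2)
next
  case (Suc j)
  have "two_row_diff_sum (Suc (Suc (Suc j))) d =
      (if 0 < d then two_row_diff_sum (Suc (Suc j)) d + two_row_diff_sum (Suc (Suc j)) (d - 1)
       else 0) + two_row_diff_sum (Suc (Suc j)) d + (Suc j choose d)
      + two_row_diff_sum (Suc (Suc j)) (Suc d)"
    using two_row_diff_sum_Suc[of "Suc (Suc j)" d] two_row_count_one_row[of d "Suc j"] by simp
  moreover note ballot_Suc[of "Suc j" d]
  ultimately show ?case
    using Suc.IH[of d] Suc.IH[of "Suc d"] Suc.IH[of "d - 1"]
    by (cases d rule: nat.exhaust[case_product nat.exhaust[of "d - 1"]]) simp_all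
qed

lemma real_choose_diff_Suc:
  assumes "k \<le> N"
  shows "real (N choose k) - real (N choose Suc k)
           = (2 * real k + 1 - real N) / (real k + 1) * real (N choose k)"
proof -
  have "Suc k * (N choose Suc k) = (N - k) * (N choose k)"
    by (simp only: binomial_absorption binomial_absorb_comp)
  then have "(real k + 1) * real (N choose Suc k) = (real N - real k) * real (N choose k)"
    using assms by (metis of_nat_Suc of_nat_diff of_nat_mult add.commute)
  then show ?thesis by (simp add: field_simps)
qed

lemma ballot_formula:
  assumes "d \<le> L"
  shows "real_of_int (ballot L d)
           = (2 * real d + 1) / (real L + real d + 1) * real ((2 * L) choose (L + d))"
  using real_choose_diff_Suc[of "L + d" "2 * L"] assms by (simp add: ballot_def algebra_simps)

lemma catalan_eq_ballot: "catalan m = real_of_int (ballot m 0)"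
  by (simp add: ballot_formula catalan_def)

lemma sum_card_SYT_plus_two_row:
  assumes "n \<ge> 1"
  shows "(\<Sum>(b, k) \<in> {(b, k). 2*b + k + 1 = n}. card (SYT_plus k [b+1, b]))
           = 1 + two_row_diff_sum n 1"
proof -
  have pairs: "{(b, k). 2*b + k + 1 = n} = (\<lambda>b. (b, n - 2*b - 1)) ` {b. 2*b < n}"
    by (auto simp: image_def)
  have "inj_on (\<lambda>b. (b, n - 2*b - 1)) {b. 2*b < n}" by (auto simp: inj_on_def)
  moreover have "card (SYT_plus (n - 2*b - 1) [b+1, b]) = two_row_count (b + 1) b n"
    if "2*b < n" for b
    using card_SYT_plus_two_row[of "n - 2*b - 1" b] that by simp
  ultimately have "(\<Sum>(b, k) \<in> {(b, k). 2*b + k + 1 = n}. card (SYT_plus k [b+1, b]))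
      = (\<Sum>b | 2*b < n. two_row_count (b + 1) b n)"
    unfolding pairs by (simp add: sum.reindex)
  also have "\<dots> = (\<Sum>b \<in> {0..n}. two_row_count (b + 1) b n)"
    by (rule sum.mono_neutral_left) (auto simp: two_row_count_eq_0 not_less)
  also have "\<dots> = two_row_count 1 0 n + two_row_diff_sum n 1"
    by (simp add: sum.atLeast_Suc_atMost two_row_diff_sum_def)
  finally show ?thesis
    using assms two_row_count_one_row[of 0 "n - 1"] by simp
qed

theorem corollary9:
  fixes n :: nat
  assumes "n \<ge> 3"
  shows "(\<Sum>(b, k) \<in> {(b, k). 2*b + k + 1 = n}. real (card (SYT_plus k [b+1, b])))
           = catalan n - catalan (n - 1)
       \<and> catalan n - catalan (n - 1) = 3 / (n + 1) * real ((2*n - 2) choose n)"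
proof -
  have "\<exists>j. n = Suc (Suc j)" using assms by presburger
  then obtain j where n: "n = Suc (Suc j)" ..
  have "(\<Sum>(b, k) \<in> {(b, k). 2*b + k + 1 = n}. real (card (SYT_plus k [b+1, b])))
      = real_of_int (ballot (Suc j) 1)"
    using sum_card_SYT_plus_two_row[of n] two_row_diff_sum_closed_form[of j 1] n
    by (simp add: of_nat_sum[symmetric] case_prod_beta)
  moreover have "catalan n - catalan (n - 1) = real_of_int (ballot (Suc j) 1)"
    using ballot_Suc[of "Suc j" 0] by (simp add: n catalan_eq_ballot)
  moreover have "real_of_int (ballot (Suc j) 1) = 3 / (n + 1) * real ((2*n - 2) choose n)"
    by (simp add: ballot_formula n)
  ultimately show ?thesis by simp
qed

end
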